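(* Let $\omega\in(0,1]$, $a\in(0,1]$, $\hat R_*>0$, and fix $j\in\mathbb{N}$, $\varepsilon_j>0$, $d_j\in(0,1/4]$, $R_j\in(\hat R_*,1]$. Suppose that the stage-$j$ Hamiltonian $H^{(j)}=\omega pq+\eta+F^{(j)}(p,q,t)$ satisfies $\|F^{(j)}(p,q,t)\|_{R_j;\mathbb{R}^+}\le\varepsilon_je^{-at}$ for all $t\in\mathbb{R}^+$, and that $$\frac{4e^2\varepsilon_j}{\omega a\hat R_*^2d_j^6}\le\frac12.$$ Set $R_{j+1}:=(1-2d_j)R_j$ and $\varepsilon_{j+1}:=\dfrac{8e^2\varepsilon_j^2}{\omega a\hat R_*^2d_j^6}$. Then the stage-$(j+1)$ perturbation satisfies $\|F^{(j+1)}(p,q,t)\|_{R_{j+1};\mathbb{R}^+}\le\varepsilon_{j+1}e^{-at}$ for all $t\in\mathbb{R}^+$.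
   Context: $\mathbb{R}^+:=[0,\infty)$; multi-indices $\underline\alpha=(\alpha_1,\alpha_2)\in\mathbb{N}^2$, $|\underline\alpha|=\alpha_1+\alpha_2$. Time-dependent Taylor norm: $\|G\|_{\rho;\mathbb{R}^+}:=\sum_{\underline\alpha}|g_{\underline\alpha}(t)|\rho^{|\underline\alpha|}$ for $G=\sum g_{\underline\alpha}(t)p^{\alpha_1}q^{\alpha_2}$. $F^{(j)}=\sum_{\underline\alpha}f^{(j)}_{\underline\alpha}(t)p^{\alpha_1}q^{\alpha_2}$ is holomorphic in $(p,q)$ for $|p|,|q|<R_j$ with continuous coefficients. The generating function $\chi^{(j)}=\sum_{\underline\alpha}c_{\underline\alpha}(t)p^{\alpha_1}q^{\alpha_2}$ is defined by: for $\hat\lambda:=\omega(\alpha_1-\alpha_2)$, $c_{\underline\alpha}$ solves $\dot c_{\underline\alpha}+\hat\lambda c_{\underline\alpha}=f^{(j)}_{\underline\alpha}$ with $c_{\underline\alpha}(0)=0$ if $\hat\lambda>0$ and $c_{\underline\alpha}(0)=-\int_0^\infty e^{\hat\lambda s}f^{(j)}_{\underline\alpha}(s)ds$ if $\hat\lambda\le0$ (so that $\{\omega pq+\eta,\chi^{(j)}\}+F^{(j)}=0$). For functions independent of $\eta$, $\mathcal{L}_\chi G:=\{G,\chi\}=\partial_qG\,\partial_p\chi-\partial_pG\,\partial_q\chi$. The next stage is $H^{(j+1)}:=\exp(\mathcal{L}_{\chi^{(j)}})H^{(j)}=\omega pq+\eta+F^{(j+1)}$ with $F^{(j+1)}:=\sum_{s\ge1}\frac{s}{(s+1)!}\mathcal{L}^s_{\chi^{(j)}}F^{(j)}$.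 *)

theory Defs
  imports "HOL-Analysis.Analysis"
begin

text \<open>A time-dependent power series in (p,q): the coefficient of p^i q^k at time t is g (i,k) t.\<close>
type_synonym tser = "nat \<times> nat \<Rightarrow> real \<Rightarrow> complex"

definition dp :: "tser \<Rightarrow> tser" where
  "dp g = (\<lambda>(i,k) t. of_nat (i+1) * g (i+1,k) t)"

definition dq :: "tser \<Rightarrow> tser" where
  "dq g = (\<lambda>(i,k) t. of_nat (k+1) * g (i,k+1) t)"

definition smul :: "tser \<Rightarrow> tser \<Rightarrow> tser" where
  "smul g h = (\<lambda>(i,k) t. \<Sum>a\<le>i. \<Sum>b\<le>k. g (a,b) t * h (i-a,k-b) t)"

text \<open>Lie derivative  L_chi G = {G,chi} = dq G * dp chi - dp G * dq chi.\<close>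
definition lie :: "tser \<Rightarrow> tser \<Rightarrow> tser" where
  "lie chi g = (\<lambda>\<alpha> t. smul (dq g) (dp chi) \<alpha> t - smul (dp g) (dq chi) \<alpha> t)"

definition next_pert :: "tser \<Rightarrow> tser \<Rightarrow> tser" where
  "next_pert chi f = (\<lambda>\<alpha> t. \<Sum>s. of_real (real s / fact (s+1)) * ((lie chi ^^ s) f) \<alpha> t)"

definition taylor_norm :: "tser \<Rightarrow> real \<Rightarrow> real \<Rightarrow> ennreal" where
  "taylor_norm g \<rho> t = (SUP S\<in>{S. finite S}. ennreal (\<Sum>\<alpha>\<in>S. norm (g \<alpha> t) * \<rho> ^ (fst \<alpha> + snd \<alpha>)))"

end

theory Submission
  imports Defs
begin

text \<open>Coefficientwise the homological equation is the scalar ODE \<open>c' = F\<^sub>\<alpha> - \<lambda> c\<close>, and the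
  prescribed initial values select its bounded solution: for \<open>\<lambda> > 0\<close> the damping gives
  \<open>|c| \<le> sup |F\<^sub>\<alpha>| / \<lambda> \<le> sup |F\<^sub>\<alpha>| / \<omega>\<close>, for \<open>\<lambda> \<le> 0\<close> the decay of \<open>F\<close> gives
  \<open>|c| \<le> sup |F\<^sub>\<alpha>| / a\<close>. So the coefficients of \<open>\<chi>\<close> are bounded by \<open>\<epsilon> / (\<omega> a R\<^sup>i\<^sup>+\<^sup>k)\<close>
  uniformly in time, and summing on the radius \<open>(1 - d/2) R\<close> followed by one Cauchy estimate
  bounds \<open>\<partial>\<^sub>p\<chi>\<close> and \<open>\<partial>\<^sub>q\<chi>\<close> on the radius \<open>(1 - d) R\<close>. Each application of \<open>L\<^sub>\<chi>\<close> costs one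
  further Cauchy estimate; spending the remaining margin \<open>d R\<close> in \<open>s\<close> equal steps bounds
  \<open>L\<^sub>\<chi>\<^sup>s F\<close> by \<open>\<epsilon> e\<^sup>-\<^sup>a\<^sup>t (s x)\<^sup>s\<close>, and since \<open>s\<^sup>s \<le> e\<^sup>s s!\<close> the weights \<open>s/(s+1)!\<close> turn the
  Lie series into a geometric series with ratio \<open>e x \<le> 1/2\<close>.\<close>

definition taylor_norm_le :: "tser \<Rightarrow> real \<Rightarrow> real \<Rightarrow> real \<Rightarrow> bool" where
  "taylor_norm_le g \<rho> t B \<longleftrightarrow>
     (\<forall>S. finite S \<longrightarrow> (\<Sum>\<alpha>\<in>S. norm (g \<alpha> t) * \<rho> ^ (fst \<alpha> + snd \<alpha>)) \<le> B)"

lemma taylor_norm_le_iff: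
  "0 \<le> B \<Longrightarrow> taylor_norm g \<rho> t \<le> ennreal B \<longleftrightarrow> taylor_norm_le g \<rho> t B"
  unfolding taylor_norm_def taylor_norm_le_def by (simp add: SUP_le_iff)

lemma taylor_norm_le_nonneg: "taylor_norm_le g \<rho> t B \<Longrightarrow> 0 \<le> B"
  unfolding taylor_norm_le_def by (metis finite.emptyI sum.empty)

lemma taylor_norm_le_coeff:
  assumes "taylor_norm_le g \<rho> t B" "0 < \<rho>"
  shows "norm (g \<alpha> t) \<le> B / \<rho> ^ (fst \<alpha> + snd \<alpha>)"
proof -
  have "norm (g \<alpha> t) * \<rho> ^ (fst \<alpha> + snd \<alpha>) \<le> B"
    using assms(1)[unfolded taylor_norm_le_def, rule_format, of "{\<alpha>}"] by simp
  with assms(2) show ?thesis by (simp add: pos_le_divide_eq)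
qed

lemma taylor_norm_le_mono:
  assumes "taylor_norm_le g r t B" "0 \<le> \<rho>" "\<rho> \<le> r" "B \<le> B'"
  shows "taylor_norm_le g \<rho> t B'"
  unfolding taylor_norm_le_def
proof (intro allI impI)
  fix S :: "(nat \<times> nat) set" assume "finite S"
  have "(\<Sum>\<alpha>\<in>S. norm (g \<alpha> t) * \<rho> ^ (fst \<alpha> + snd \<alpha>)) \<le> (\<Sum>\<alpha>\<in>S. norm (g \<alpha> t) * r ^ (fst \<alpha> + snd \<alpha>))"
    using assms(2,3) by (intro sum_mono mult_left_mono power_mono) auto
  also have "\<dots> \<le> B'" using assms(1,4) \<open>finite S\<close> unfolding taylor_norm_le_def by fastforce
  finally show "(\<Sum>\<alpha>\<in>S. norm (g \<alpha> t) * \<rho> ^ (fst \<alpha> + snd \<alpha>)) \<le> B'" .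
qed

lemma finite_subset_square:
  assumes "finite (S :: (nat \<times> nat) set)"
  obtains M where "S \<subseteq> {..M} \<times> {..M}"
proof -
  obtain M where "\<forall>x \<in> fst ` S \<union> snd ` S. x \<le> M"
    using assms finite_nat_set_iff_bounded_le by (metis finite_Un finite_imageI)
  then have "S \<subseteq> {..M} \<times> {..M}" by force
  then show ?thesis by (rule that)
qed

lemma taylor_norm_le_squareI:
  assumes "0 \<le> \<rho>"
    and "\<And>M. (\<Sum>\<alpha>\<in>{..M} \<times> {..M}. norm (g \<alpha> t) * \<rho> ^ (fst \<alpha> + snd \<alpha>)) \<le> B"
  shows "taylor_norm_le g \<rho> t B"
  unfolding taylor_norm_le_def
proof (intro allI impI)
  fix S :: "(nat \<times> nat) set" assume "finite S"
  then obtain M where "S \<subseteq> {..M} \<times> {..M}" by (rule finite_subset_square)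
  then have "(\<Sum>\<alpha>\<in>S. norm (g \<alpha> t) * \<rho> ^ (fst \<alpha> + snd \<alpha>))
      \<le> (\<Sum>\<alpha>\<in>{..M} \<times> {..M}. norm (g \<alpha> t) * \<rho> ^ (fst \<alpha> + snd \<alpha>))"
    using assms(1) by (intro sum_mono2) auto
  also have "\<dots> \<le> B" by (rule assms(2))
  finally show "(\<Sum>\<alpha>\<in>S. norm (g \<alpha> t) * \<rho> ^ (fst \<alpha> + snd \<alpha>)) \<le> B" .
qed

lemma taylor_norm_le_diff:
  assumes "taylor_norm_le g \<rho> t B1" "taylor_norm_le h \<rho> t B2" "0 \<le> \<rho>"
  shows "taylor_norm_le (\<lambda>\<alpha> t. g \<alpha> t - h \<alpha> t) \<rho> t (B1 + B2)"
  unfolding taylor_norm_le_def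
proof (intro allI impI)
  fix S :: "(nat \<times> nat) set" assume "finite S"
  have "(\<Sum>\<alpha>\<in>S. norm (g \<alpha> t - h \<alpha> t) * \<rho> ^ (fst \<alpha> + snd \<alpha>))
      \<le> (\<Sum>\<alpha>\<in>S. norm (g \<alpha> t) * \<rho> ^ (fst \<alpha> + snd \<alpha>)) + (\<Sum>\<alpha>\<in>S. norm (h \<alpha> t) * \<rho> ^ (fst \<alpha> + snd \<alpha>))"
    unfolding sum.distrib[symmetric] using assms(3)
    by (intro sum_mono) (metis distrib_right mult_right_mono norm_triangle_ineq4 zero_le_power)
  also have "\<dots> \<le> B1 + B2" using assms(1,2) \<open>finite S\<close> unfolding taylor_norm_le_def by (meson add_mono)
  finally show "(\<Sum>\<alpha>\<in>S. norm (g \<alpha> t - h \<alpha> t) * \<rho> ^ (fst \<alpha> + snd \<alpha>)) \<le> B1 + B2" .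
qed

lemma taylor_norm_le_scale:
  assumes "taylor_norm_le g \<rho> t B"
  shows "taylor_norm_le (\<lambda>\<alpha> t. of_real x * g \<alpha> t) \<rho> t (\<bar>x\<bar> * B)"
  using assms unfolding taylor_norm_le_def
  by (simp add: norm_mult mult.assoc flip: sum_distrib_left) (meson abs_ge_zero mult_left_mono)

lemma taylor_norm_le_suminf:
  assumes G: "\<And>s. taylor_norm_le (G s) \<rho> t (M s)" and M: "summable M" and "0 < \<rho>"
  shows "(\<forall>\<alpha>. summable (\<lambda>s. G s \<alpha> t)) \<and> taylor_norm_le (\<lambda>\<alpha> t. \<Sum>s. G s \<alpha> t) \<rho> t (\<Sum>s. M s)"
proof -
  let ?w = "\<lambda>\<alpha> s. norm (G s \<alpha> t) * \<rho> ^ (fst \<alpha> + snd \<alpha>)"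
  have norm_summable: "summable (\<lambda>s. norm (G s \<alpha> t))" for \<alpha>
    using taylor_norm_le_coeff[OF G \<open>0 < \<rho>\<close>, of _ \<alpha>]
    by (intro summable_comparison_test'[OF summable_divide[OF M], where N = 0]) auto
  have pointwise: "norm (\<Sum>s. G s \<alpha> t) * \<rho> ^ (fst \<alpha> + snd \<alpha>) \<le> (\<Sum>s. ?w \<alpha> s)" for \<alpha>
  proof -
    have "norm (\<Sum>s. G s \<alpha> t) * \<rho> ^ (fst \<alpha> + snd \<alpha>) \<le> (\<Sum>s. norm (G s \<alpha> t)) * \<rho> ^ (fst \<alpha> + snd \<alpha>)"
      using \<open>0 < \<rho>\<close> by (intro mult_right_mono summable_norm norm_summable) simp
    then show ?thesis by (simp only: suminf_mult2[OF norm_summable])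
  qed
  have "(\<Sum>\<alpha>\<in>S. norm (\<Sum>s. G s \<alpha> t) * \<rho> ^ (fst \<alpha> + snd \<alpha>)) \<le> (\<Sum>s. M s)" if "finite S" for S
  proof -
    have "(\<Sum>\<alpha>\<in>S. norm (\<Sum>s. G s \<alpha> t) * \<rho> ^ (fst \<alpha> + snd \<alpha>)) \<le> (\<Sum>\<alpha>\<in>S. \<Sum>s. ?w \<alpha> s)"
      by (rule sum_mono[OF pointwise])
    also have "\<dots> = (\<Sum>s. \<Sum>\<alpha>\<in>S. ?w \<alpha> s)"
      by (rule suminf_sum[symmetric]) (rule summable_mult2[OF norm_summable])
    also have "\<dots> \<le> (\<Sum>s. M s)"
    proof (rule suminf_le[OF _ summable_sum M])
      show "(\<Sum>\<alpha>\<in>S. ?w \<alpha> s) \<le> M s" for s using G[of s] \<open>finite S\<close> unfolding taylor_norm_le_def by blast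
    qed (rule summable_mult2[OF norm_summable])
    finally show ?thesis .
  qed
  then show ?thesis
    using summable_norm_cancel[OF norm_summable] unfolding taylor_norm_le_def by simp
qed

lemma taylor_norm_le_of_coeff_bound:
  assumes coeff: "\<And>\<alpha>. norm (g \<alpha> t) \<le> A / R ^ (fst \<alpha> + snd \<alpha>)" and "0 \<le> A" "0 \<le> r" "r < R"
  shows "taylor_norm_le g r t (A / (1 - r / R)\<^sup>2)"
proof (rule taylor_norm_le_squareI[OF \<open>0 \<le> r\<close>])
  fix M
  define x where "x = r / R"
  have x: "0 \<le> x" "x < 1" using assms(3,4) unfolding x_def by auto
  have geometric: "(\<Sum>i\<le>M. x ^ i) \<le> 1 / (1 - x)"
    using x by (subst suminf_geometric[symmetric]) (auto intro: sum_le_suminf)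
  have "(\<Sum>\<alpha>\<in>{..M} \<times> {..M}. norm (g \<alpha> t) * r ^ (fst \<alpha> + snd \<alpha>))
      \<le> (\<Sum>\<alpha>\<in>{..M} \<times> {..M}. A * (x ^ fst \<alpha> * x ^ snd \<alpha>))"
  proof (rule sum_mono)
    fix \<alpha> :: "nat \<times> nat"
    have "norm (g \<alpha> t) * r ^ (fst \<alpha> + snd \<alpha>) \<le> A / R ^ (fst \<alpha> + snd \<alpha>) * r ^ (fst \<alpha> + snd \<alpha>)"
      using coeff assms(3) by (intro mult_right_mono) auto
    then show "norm (g \<alpha> t) * r ^ (fst \<alpha> + snd \<alpha>) \<le> A * (x ^ fst \<alpha> * x ^ snd \<alpha>)"
      unfolding x_def by (simp add: power_divide power_add)
  qed
  also have "\<dots> = A * (\<Sum>\<alpha>\<in>{..M} \<times> {..M}. x ^ fst \<alpha> * x ^ snd \<alpha>)"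
    by (simp add: sum_distrib_left)
  also have "\<dots> = A * ((\<Sum>i\<le>M. x ^ i) * (\<Sum>k\<le>M. x ^ k))"
    by (simp add: sum_product sum.cartesian_product case_prod_beta)
  also have "\<dots> \<le> A * (1 / (1 - x) * (1 / (1 - x)))"
    using geometric x \<open>0 \<le> A\<close> by (intro mult_left_mono mult_mono) (auto intro: sum_nonneg)
  also have "\<dots> = A / (1 - r / R)\<^sup>2" unfolding x_def by (simp add: power2_eq_square)
  finally show "(\<Sum>\<alpha>\<in>{..M} \<times> {..M}. norm (g \<alpha> t) * r ^ (fst \<alpha> + snd \<alpha>)) \<le> A / (1 - r / R)\<^sup>2" .
qed

lemma power_Suc_ge_derivative:
  fixes \<rho> \<delta> :: real
  assumes "0 \<le> \<rho>" "0 < \<delta>"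
  shows "real (Suc n) * \<rho> ^ n * \<delta> \<le> (\<rho> + \<delta>) ^ Suc n"
proof (induction n)
  case 0 then show ?case using assms by simp
next
  case (Suc n)
  have "real (Suc (Suc n)) * \<rho> ^ Suc n * \<delta> = \<rho> * (real (Suc n) * \<rho> ^ n * \<delta>) + \<rho> ^ Suc n * \<delta>"
    by (simp add: algebra_simps)
  also have "\<dots> \<le> \<rho> * (\<rho> + \<delta>) ^ Suc n + (\<rho> + \<delta>) ^ Suc n * \<delta>"
    using Suc.IH assms by (intro add_mono mult_left_mono mult_right_mono power_mono) auto
  also have "\<dots> = (\<rho> + \<delta>) ^ Suc (Suc n)" by (simp add: algebra_simps)
  finally show ?case .
qed

text \<open>The Cauchy estimate common to \<open>dp\<close> and \<open>dq\<close>.\<close>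

lemma taylor_norm_le_degree_shift:
  assumes g: "taylor_norm_le g r t B" and \<delta>: "0 < \<delta>" "\<delta> \<le> r"
    and h: "inj h" "\<And>\<alpha>. fst (h \<alpha>) + snd (h \<alpha>) = Suc (fst \<alpha> + snd \<alpha>)"
    and G: "\<And>\<alpha>. norm (G \<alpha> t) \<le> real (Suc (fst \<alpha> + snd \<alpha>)) * norm (g (h \<alpha>) t)"
  shows "taylor_norm_le G (r - \<delta>) t (B / \<delta>)"
  unfolding taylor_norm_le_def
proof (intro allI impI)
  fix S :: "(nat \<times> nat) set" assume "finite S"
  let ?w = "\<lambda>\<beta>. norm (g \<beta> t) * r ^ (fst \<beta> + snd \<beta>)"
  have "(\<Sum>\<alpha>\<in>S. norm (G \<alpha> t) * (r - \<delta>) ^ (fst \<alpha> + snd \<alpha>)) \<le> (\<Sum>\<alpha>\<in>S. ?w (h \<alpha>) / \<delta>)"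
  proof (rule sum_mono)
    fix \<alpha> :: "nat \<times> nat"
    let ?n = "fst \<alpha> + snd \<alpha>"
    have "norm (G \<alpha> t) * (r - \<delta>) ^ ?n \<le> (real (Suc ?n) * norm (g (h \<alpha>) t)) * (r - \<delta>) ^ ?n"
      using G[of \<alpha>] \<delta> by (intro mult_right_mono) auto
    also have "\<dots> = norm (g (h \<alpha>) t) * (real (Suc ?n) * (r - \<delta>) ^ ?n)"
      by (simp only: ac_simps)
    also have "\<dots> \<le> norm (g (h \<alpha>) t) * (r ^ Suc ?n / \<delta>)"
      using power_Suc_ge_derivative[of "r - \<delta>" \<delta> ?n] \<delta>
      by (intro mult_left_mono) (auto simp: pos_le_divide_eq)
    finally show "norm (G \<alpha> t) * (r - \<delta>) ^ ?n \<le> ?w (h \<alpha>) / \<delta>" by (simp add: h(2))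
  qed
  also have "\<dots> = (\<Sum>\<beta>\<in>h ` S. ?w \<beta>) / \<delta>"
    by (simp add: sum.reindex inj_on_subset[OF h(1)] sum_divide_distrib)
  also have "\<dots> \<le> B / \<delta>"
    using g \<open>finite S\<close> \<delta> unfolding taylor_norm_le_def by (intro divide_right_mono) auto
  finally show "(\<Sum>\<alpha>\<in>S. norm (G \<alpha> t) * (r - \<delta>) ^ (fst \<alpha> + snd \<alpha>)) \<le> B / \<delta>" .
qed

lemma taylor_norm_le_dp:
  assumes "taylor_norm_le g r t B" "0 < \<delta>" "\<delta> \<le> r"
  shows "taylor_norm_le (dp g) (r - \<delta>) t (B / \<delta>)"
proof (rule taylor_norm_le_degree_shift[OF assms, where h = "\<lambda>(i, k). (Suc i, k)"])
  show "norm (dp g \<alpha> t) \<le> real (Suc (fst \<alpha> + snd \<alpha>)) * norm (g ((\<lambda>(i, k). (Suc i, k)) \<alpha>) t)" for \<alpha>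
    by (simp add: dp_def case_prod_beta norm_mult mult_right_mono del: of_nat_Suc)
qed (auto simp: inj_def)

lemma taylor_norm_le_dq:
  assumes "taylor_norm_le g r t B" "0 < \<delta>" "\<delta> \<le> r"
  shows "taylor_norm_le (dq g) (r - \<delta>) t (B / \<delta>)"
proof (rule taylor_norm_le_degree_shift[OF assms, where h = "\<lambda>(i, k). (i, Suc k)"])
  show "norm (dq g \<alpha> t) \<le> real (Suc (fst \<alpha> + snd \<alpha>)) * norm (g ((\<lambda>(i, k). (i, Suc k)) \<alpha>) t)" for \<alpha>
    by (simp add: dq_def case_prod_beta norm_mult mult_right_mono del: of_nat_Suc)
qed (auto simp: inj_def)

lemma norm_smul_weighted_le:
  assumes "0 \<le> \<rho>"
  shows "norm (smul g h (i, k) t) * \<rho> ^ (i + k)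
    \<le> (\<Sum>(a, b)\<in>{..i} \<times> {..k}. (norm (g (a, b) t) * \<rho> ^ (a + b))
         * (norm (h (i - a, k - b) t) * \<rho> ^ ((i - a) + (k - b))))"
proof -
  have "norm (smul g h (i, k) t) \<le> (\<Sum>a\<le>i. norm (\<Sum>b\<le>k. g (a, b) t * h (i - a, k - b) t))"
    unfolding smul_def by (simp add: norm_sum)
  also have "\<dots> \<le> (\<Sum>a\<le>i. \<Sum>b\<le>k. norm (g (a, b) t * h (i - a, k - b) t))"
    by (intro sum_mono norm_sum)
  finally have "norm (smul g h (i, k) t) * \<rho> ^ (i + k)
      \<le> (\<Sum>a\<le>i. \<Sum>b\<le>k. norm (g (a, b) t * h (i - a, k - b) t)) * \<rho> ^ (i + k)"
    using assms by (simp add: mult_right_mono)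
  also have "\<dots> = (\<Sum>a\<le>i. \<Sum>b\<le>k. (norm (g (a, b) t) * \<rho> ^ (a + b))
      * (norm (h (i - a, k - b) t) * \<rho> ^ ((i - a) + (k - b))))"
    unfolding sum_distrib_right
  proof (intro sum.cong refl)
    fix a b assume "a \<in> {..i}" "b \<in> {..k}"
    then have "\<rho> ^ (i + k) = \<rho> ^ (a + b) * \<rho> ^ ((i - a) + (k - b))" by (simp add: power_add[symmetric])
    then show "norm (g (a, b) t * h (i - a, k - b) t) * \<rho> ^ (i + k)
        = norm (g (a, b) t) * \<rho> ^ (a + b) * (norm (h (i - a, k - b) t) * \<rho> ^ ((i - a) + (k - b)))"
      by (simp add: norm_mult mult_ac)
  qed
  finally show ?thesis by (simp only: sum.cartesian_product)
qed

lemma taylor_norm_le_smul: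
  assumes g: "taylor_norm_le g \<rho> t B1" and h: "taylor_norm_le h \<rho> t B2" and "0 \<le> \<rho>"
  shows "taylor_norm_le (smul g h) \<rho> t (B1 * B2)"
proof (rule taylor_norm_le_squareI[OF \<open>0 \<le> \<rho>\<close>])
  fix M
  define P where "P = (\<lambda>\<alpha>. norm (g \<alpha> t) * \<rho> ^ (fst \<alpha> + snd \<alpha>))"
  define Q where "Q = (\<lambda>\<alpha>. norm (h \<alpha> t) * \<rho> ^ (fst \<alpha> + snd \<alpha>))"
  define box where "box = (\<lambda>\<alpha> :: nat \<times> nat. {..fst \<alpha>} \<times> {..snd \<alpha>})"
  define decomp where "decomp = (\<lambda>(\<alpha> :: nat \<times> nat, \<beta> :: nat \<times> nat). (\<beta>, (fst \<alpha> - fst \<beta>, snd \<alpha> - snd \<beta>)))"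
  have PQ: "0 \<le> P \<beta>" "0 \<le> Q \<beta>" for \<beta> unfolding P_def Q_def using \<open>0 \<le> \<rho>\<close> by auto
  have inj: "inj_on decomp (Sigma (box (M, M)) box)"
    unfolding inj_on_def decomp_def box_def by (auto simp: prod_eq_iff)
  have pointwise: "norm (smul g h \<alpha> t) * \<rho> ^ (fst \<alpha> + snd \<alpha>)
      \<le> (\<Sum>\<beta>\<in>box \<alpha>. P \<beta> * Q (fst \<alpha> - fst \<beta>, snd \<alpha> - snd \<beta>))" for \<alpha>
  proof -
    obtain i k where "\<alpha> = (i, k)" by (cases \<alpha>)
    then show ?thesis
      using norm_smul_weighted_le[OF \<open>0 \<le> \<rho>\<close>, of g h i k t]
      by (simp add: P_def Q_def box_def case_prod_beta)
  qed
  have "(\<Sum>\<alpha>\<in>{..M} \<times> {..M}. norm (smul g h \<alpha> t) * \<rho> ^ (fst \<alpha> + snd \<alpha>))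
      \<le> (\<Sum>\<alpha>\<in>box (M, M). \<Sum>\<beta>\<in>box \<alpha>. P \<beta> * Q (fst \<alpha> - fst \<beta>, snd \<alpha> - snd \<beta>))"
    using pointwise by (simp add: box_def sum_mono)
  moreover have "\<dots> = (\<Sum>z\<in>Sigma (box (M, M)) box. P (fst (decomp z)) * Q (snd (decomp z)))"
    by (subst sum.Sigma) (auto simp: box_def decomp_def case_prod_beta)
  moreover have "\<dots> = (\<Sum>z\<in>decomp ` Sigma (box (M, M)) box. P (fst z) * Q (snd z))"
    by (simp add: sum.reindex[OF inj])
  moreover have "\<dots> \<le> (\<Sum>z\<in>box (M, M) \<times> box (M, M). P (fst z) * Q (snd z))"
    using PQ by (intro sum_mono2) (auto simp: box_def decomp_def)
  moreover have "\<dots> = (\<Sum>\<alpha>\<in>box (M, M). P \<alpha>) * (\<Sum>\<beta>\<in>box (M, M). Q \<beta>)"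
    by (simp add: sum_product sum.cartesian_product case_prod_beta)
  moreover have "\<dots> \<le> B1 * B2"
    using g h taylor_norm_le_nonneg[OF g] PQ unfolding P_def Q_def box_def taylor_norm_le_def
    by (intro mult_mono sum_nonneg) auto
  ultimately show "(\<Sum>\<alpha>\<in>{..M} \<times> {..M}. norm (smul g h \<alpha> t) * \<rho> ^ (fst \<alpha> + snd \<alpha>)) \<le> B1 * B2"
    by linarith
qed

lemma taylor_norm_le_lie:
  assumes "taylor_norm_le g r t B" "taylor_norm_le (dp c) (r - \<delta>) t C"
    "taylor_norm_le (dq c) (r - \<delta>) t C" "0 < \<delta>" "\<delta> \<le> r"
  shows "taylor_norm_le (lie c g) (r - \<delta>) t (2 * C * B / \<delta>)"
proof -
  have "0 \<le> r - \<delta>" using assms(5) by simp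
  from taylor_norm_le_diff[OF
      taylor_norm_le_smul[OF taylor_norm_le_dq[OF assms(1,4,5)] assms(2) this]
      taylor_norm_le_smul[OF taylor_norm_le_dp[OF assms(1,4,5)] assms(3) this] this]
  show ?thesis unfolding lie_def by (simp add: algebra_simps)
qed

lemma taylor_norm_le_lie_power:
  assumes f: "taylor_norm_le f r t B"
    and c: "taylor_norm_le (dp c) r t C" "taylor_norm_le (dq c) r t C"
    and "0 < \<delta>" "real k * \<delta> \<le> r"
  shows "taylor_norm_le ((lie c ^^ k) f) (r - real k * \<delta>) t (B * (2 * C / \<delta>) ^ k)"
  using assms(5)
proof (induction k)
  case 0 then show ?case using f by simp
next
  case (Suc k)
  have radius: "0 \<le> r - real k * \<delta> - \<delta>" "r - real k * \<delta> - \<delta> \<le> r"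
  proof -
    have "0 \<le> real k * \<delta>" using \<open>0 < \<delta>\<close> by simp
    moreover have "real (Suc k) * \<delta> = real k * \<delta> + \<delta>" by (simp add: distrib_right)
    ultimately show "0 \<le> r - real k * \<delta> - \<delta>" "r - real k * \<delta> - \<delta> \<le> r"
      using Suc.prems \<open>0 < \<delta>\<close> by linarith+
  qed
  then have "taylor_norm_le ((lie c ^^ k) f) (r - real k * \<delta>) t (B * (2 * C / \<delta>) ^ k)"
    using Suc.IH \<open>0 < \<delta>\<close> by simp
  from taylor_norm_le_lie[OF this taylor_norm_le_mono[OF c(1) radius order.refl]
      taylor_norm_le_mono[OF c(2) radius order.refl] \<open>0 < \<delta>\<close>] radius
  show ?case by (simp add: algebra_simps)
qed

lemma taylor_norm_le_lie_power_shrink: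
  assumes f: "taylor_norm_le f r t B"
    and c: "taylor_norm_le (dp c) r t C" "taylor_norm_le (dq c) r t C"
    and "0 < D" "D \<le> r"
  shows "taylor_norm_le ((lie c ^^ k) f) (r - D) t (B * (2 * C * real k / D) ^ k)"
proof (cases "k = 0")
  case True
  then show ?thesis using assms by (auto intro: taylor_norm_le_mono[OF f])
next
  case False
  with taylor_norm_le_lie_power[OF f c, of "D / real k" k] assms show ?thesis by simp
qed

lemma power_self_le_exp_fact: "real n ^ n \<le> exp (real n) * fact n"
proof -
  have "real n ^ n /\<^sub>R fact n \<le> (\<Sum>m. real n ^ m /\<^sub>R fact m)"
    using exp_converges[of "real n"] by (intro sum_le_suminf[where I = "{n}", simplified] sums_summable) auto
  also have "\<dots> = exp (real n)" using exp_converges sums_unique by metis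
  finally show ?thesis by (simp add: field_simps)
qed

lemma lie_series_weight_le:
  assumes "0 \<le> x" "exp 1 * x \<le> 1/2"
  shows "real n / fact (n + 1) * (real n * x) ^ n \<le> 2 * (exp 1 * x) * (1/2) ^ n"
proof (cases n)
  case 0 then show ?thesis using assms by simp
next
  case (Suc m)
  have "real n / fact (n + 1) * (real n * x) ^ n = real n / real (n + 1) * (real n ^ n / fact n) * x ^ n"
    by (simp add: power_mult_distrib)
  also have "\<dots> \<le> 1 * exp (real n) * x ^ n"
    using power_self_le_exp_fact[of n] assms(1) by (intro mult_right_mono mult_mono) (auto simp: divide_le_eq)
  also have "\<dots> = (exp 1 * x) ^ n"
    using exp_of_nat_mult[of n "1 :: real"] by (simp add: power_mult_distrib)
  also have "\<dots> \<le> (exp 1 * x) * (1/2) ^ m"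
    unfolding Suc power_Suc using assms by (intro mult_left_mono power_mono) auto
  also have "\<dots> = 2 * (exp 1 * x) * (1/2) ^ n" by (simp add: Suc)
  finally show ?thesis .
qed

lemma next_pert_taylor_norm_le:
  assumes f: "taylor_norm_le f r t B"
    and c: "taylor_norm_le (dp c) r t C" "taylor_norm_le (dq c) r t C"
    and "0 < D" "D < r" and small: "2 * exp 1 * C / D \<le> 1/2"
  shows "(\<forall>\<alpha>. summable (\<lambda>s. of_real (real s / fact (s+1)) * ((lie c ^^ s) f) \<alpha> t))
    \<and> taylor_norm_le (next_pert c f) (r - D) t (8 * exp 1 * C * B / D)"
proof -
  define x where "x = 2 * C / D"
  define M where "M = (\<lambda>s. B * (2 * (exp 1 * x) * (1/2) ^ s))"
  have x: "0 \<le> x" "exp 1 * x \<le> 1/2"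
    using taylor_norm_le_nonneg[OF c(1)] \<open>0 < D\<close> small unfolding x_def by auto
  have terms: "taylor_norm_le (\<lambda>\<alpha> t. of_real (real s / fact (s+1)) * ((lie c ^^ s) f) \<alpha> t) (r - D) t (M s)" for s
  proof -
    have scaled: "taylor_norm_le (\<lambda>\<alpha> t. of_real (real s / fact (s+1)) * ((lie c ^^ s) f) \<alpha> t) (r - D) t
        (\<bar>real s / fact (s+1)\<bar> * (B * (x * real s) ^ s))"
      using taylor_norm_le_lie_power_shrink[OF f c] assms unfolding x_def
      by (intro taylor_norm_le_scale) (simp add: mult_ac)
    have "\<bar>real s / fact (s+1)\<bar> * (B * (x * real s) ^ s) = B * (real s / fact (s+1) * (real s * x) ^ s)"
      by (simp add: mult_ac)
    also have "\<dots> \<le> M s"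
      unfolding M_def using lie_series_weight_le[OF x] taylor_norm_le_nonneg[OF f] by (rule mult_left_mono)
    finally have "\<bar>real s / fact (s+1)\<bar> * (B * (x * real s) ^ s) \<le> M s" .
    then show ?thesis using \<open>D < r\<close> by (intro taylor_norm_le_mono[OF scaled _ order.refl]) simp_all
  qed
  have M_sums: "M sums (4 * exp 1 * x * B)"
    unfolding M_def using sums_mult[OF geometric_sums[of "1/2 :: real"], of "B * (2 * (exp 1 * x))"]
    by (simp add: mult_ac)
  have "0 < r - D" using \<open>D < r\<close> by simp
  from taylor_norm_le_suminf[OF terms sums_summable[OF M_sums] this]
  have "(\<forall>\<alpha>. summable (\<lambda>s. of_real (real s / fact (s+1)) * ((lie c ^^ s) f) \<alpha> t))
    \<and> taylor_norm_le (next_pert c f) (r - D) t (\<Sum>s. M s)"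
    unfolding next_pert_def .
  then show ?thesis unfolding sums_unique[OF M_sums, symmetric] x_def by (simp add: field_simps)
qed

lemma integrating_factor_has_integral:
  fixes c f :: "real \<Rightarrow> complex"
  assumes ode: "\<And>s. 0 \<le> s \<Longrightarrow> (c has_vector_derivative (f s - of_real l * c s)) (at s within {0..})"
    and "0 \<le> t"
  shows "((\<lambda>s. of_real (exp (l * s)) * f s) has_integral (of_real (exp (l * t)) * c t - c 0)) {0..t}"
proof -
  have deriv: "((\<lambda>s. of_real (exp (l * s)) * c s) has_vector_derivative of_real (exp (l * s)) * f s)
      (at s within {0..})" if "0 \<le> s" for s
  proof -
    have "((\<lambda>s. complex_of_real (exp (l * s))) has_vector_derivative of_real (exp (l * s) * l))
        (at s within {0..})"
      by (intro has_vector_derivative_of_real) (auto intro!: derivative_eq_intros)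
    from has_vector_derivative_mult[OF this ode[OF that]] show ?thesis
      by (simp add: algebra_simps)
  qed
  have "((\<lambda>s. of_real (exp (l * s)) * f s) has_integral
      (of_real (exp (l * t)) * c t - of_real (exp (l * 0)) * c 0)) {0..t}"
    by (intro fundamental_theorem_of_calculus[OF \<open>0 \<le> t\<close>]
        has_vector_derivative_within_subset[OF deriv]) auto
  then show ?thesis by simp
qed

lemma linear_ode_bound_pos:
  fixes c f :: "real \<Rightarrow> complex"
  assumes ode: "\<And>s. 0 \<le> s \<Longrightarrow> (c has_vector_derivative (f s - of_real l * c s)) (at s within {0..})"
    and "0 < l" "c 0 = 0" and f: "\<And>s. 0 \<le> s \<Longrightarrow> s \<le> t \<Longrightarrow> norm (f s) \<le> K" and "0 \<le> t"
  shows "norm (c t) \<le> K / l"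
proof -
  have "0 \<le> K" using f[of 0] \<open>0 \<le> t\<close> norm_ge_zero order.trans by blast
  have "((\<lambda>s. K * exp (l * s)) has_integral (K * exp (l * t) / l - K * exp (l * 0) / l)) {0..t}"
    by (rule fundamental_theorem_of_calculus[OF \<open>0 \<le> t\<close>])
       (use \<open>0 < l\<close> in \<open>auto intro!: derivative_eq_intros
         simp flip: has_real_derivative_iff_has_vector_derivative\<close>)
  then have K: "((\<lambda>s. K * exp (l * s)) has_integral (K * exp (l * t) / l - K / l)) {0..t}" by simp
  have "norm (of_real (exp (l * t)) * c t) \<le> K * exp (l * t) / l - K / l"
  proof -
    have "norm (integral {0..t} (\<lambda>s. of_real (exp (l * s)) * f s)) \<le> integral {0..t} (\<lambda>s. K * exp (l * s))"
      using integrating_factor_has_integral[OF ode \<open>0 \<le> t\<close>] K f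
      by (intro integral_norm_bound_integral) (auto simp: norm_mult mult.commute)
    then show ?thesis
      using integral_unique[OF integrating_factor_has_integral[OF ode \<open>0 \<le> t\<close>]]
        integral_unique[OF K] \<open>c 0 = 0\<close> by simp
  qed
  also have "\<dots> \<le> exp (l * t) * (K / l)" using \<open>0 \<le> K\<close> \<open>0 < l\<close> by (simp add: field_simps)
  finally have "exp (l * t) * norm (c t) \<le> exp (l * t) * (K / l)" by (simp add: norm_mult)
  then show ?thesis by (rule mult_left_le_imp_le) simp
qed

lemma linear_ode_bound_nonpos:
  fixes c f :: "real \<Rightarrow> complex"
  assumes ode: "\<And>s. 0 \<le> s \<Longrightarrow> (c has_vector_derivative (f s - of_real l * c s)) (at s within {0..})"
    and "l \<le> 0" "0 < a" and cont: "continuous_on {0..} f"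
    and f: "\<And>s. 0 \<le> s \<Longrightarrow> norm (f s) \<le> K * exp (- a * s)"
    and c0: "c 0 = - integral {0..} (\<lambda>s. of_real (exp (l * s)) * f s)" and "0 \<le> t"
  shows "norm (c t) \<le> K * exp (- a * t) / a"
proof -
  define g where "g = (\<lambda>s. of_real (exp (l * s)) * f s)"
  have g_bound: "norm (g s) \<le> exp (l * x) * K * exp (- a * s)" if "0 \<le> x" "x \<le> s" for x s
  proof -
    have "norm (g s) = exp (l * s) * norm (f s)" unfolding g_def by (simp add: norm_mult)
    also have "\<dots> \<le> exp (l * x) * (K * exp (- a * s))"
      using that \<open>l \<le> 0\<close> f[of s] by (intro mult_mono) (auto simp: mult_left_mono_neg)
    finally show ?thesis by simp
  qed
  have majorant: "((\<lambda>s. exp (l * x) * K * exp (- a * s)) has_integral exp (l * x) * K * (exp (- a * x) / a)) {x..}" for x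
    using has_integral_mult_right[OF has_integral_exp_minus_to_infinity[OF \<open>0 < a\<close>]] by simp
  have g_int: "g integrable_on {x..}" if "0 \<le> x" for x
  proof (rule measurable_bounded_by_integrable_imp_integrable[OF _ has_integral_integrable[OF majorant[of x]]])
    show "g \<in> borel_measurable (lebesgue_on {x..})"
      using that unfolding g_def
      by (intro continuous_imp_measurable_on_sets_lebesgue continuous_intros continuous_on_subset[OF cont]) auto
    show "norm (g s) \<le> exp (l * x) * K * exp (- a * s)" if "s \<in> {x..}" for s
      using g_bound \<open>0 \<le> x\<close> that by simp
  qed simp
  have integral_split: "integral {0..} g = integral {0..t} g + integral {t..} g"
  proof -
    have "integral ({0..t} \<union> {t..}) g = integral {0..t} g + integral {t..} g"
    proof (rule integral_Un)
      show "g integrable_on {0..t}"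
        using integrating_factor_has_integral[OF ode \<open>0 \<le> t\<close>] unfolding g_def by blast
      show "g integrable_on {t..}" by (rule g_int[OF \<open>0 \<le> t\<close>])
      have "{0..t} \<inter> {t..} = {t}" using \<open>0 \<le> t\<close> by auto
      then show "negligible ({0..t} \<inter> {t..})" by simp
    qed
    moreover have "{0..t} \<union> {t..} = {0..}" using \<open>0 \<le> t\<close> by auto
    ultimately show ?thesis by simp
  qed
  have "of_real (exp (l * t)) * c t = integral {0..t} g + c 0"
    using integral_unique[OF integrating_factor_has_integral[OF ode \<open>0 \<le> t\<close>]] unfolding g_def by simp
  also have "\<dots> = - integral {t..} g"
    using c0 integral_split unfolding g_def by simp
  finally have "norm (of_real (exp (l * t)) * c t) = norm (integral {t..} g)" by simp
  then have "exp (l * t) * norm (c t) = norm (integral {t..} g)" by (simp add: norm_mult)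
  also have "\<dots> \<le> integral {t..} (\<lambda>s. exp (l * t) * K * exp (- a * s))"
    by (rule integral_norm_bound_integral[OF g_int[OF \<open>0 \<le> t\<close>] has_integral_integrable[OF majorant]])
       (use g_bound \<open>0 \<le> t\<close> in auto)
  also have "\<dots> = exp (l * t) * (K * exp (- a * t) / a)" using integral_unique[OF majorant] by simp
  finally show ?thesis by (rule mult_left_le_imp_le) simp
qed

definition solves_homological :: "real \<Rightarrow> tser \<Rightarrow> tser \<Rightarrow> bool" where
  "solves_homological \<omega> f c \<longleftrightarrow> (\<forall>\<alpha>. let l = \<omega> * (real (fst \<alpha>) - real (snd \<alpha>)) in
     (\<forall>t\<ge>0. (c \<alpha> has_vector_derivative (f \<alpha> t - of_real l * c \<alpha> t)) (at t within {0..}))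
     \<and> (0 < l \<longrightarrow> c \<alpha> 0 = 0)
     \<and> (l \<le> 0 \<longrightarrow> c \<alpha> 0 = - integral {0..} (\<lambda>s. of_real (exp (l * s)) * f \<alpha> s)))"

lemma solves_homological_coeff_le:
  assumes hom: "solves_homological \<omega> f c" and "0 < \<omega>" "\<omega> \<le> 1" "0 < a" "a \<le> 1" "0 < R"
    and cont: "continuous_on {0..} (f \<alpha>)"
    and f: "\<And>s. 0 \<le> s \<Longrightarrow> taylor_norm_le f R s (eps * exp (- a * s))" and "0 \<le> t"
  shows "norm (c \<alpha> t) \<le> eps / (\<omega> * a) / R ^ (fst \<alpha> + snd \<alpha>)"
proof -
  define l where "l = \<omega> * (real (fst \<alpha>) - real (snd \<alpha>))"
  define K where "K = eps / R ^ (fst \<alpha> + snd \<alpha>)"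
  from hom have ode: "\<And>s. 0 \<le> s \<Longrightarrow> (c \<alpha> has_vector_derivative (f \<alpha> s - of_real l * c \<alpha> s)) (at s within {0..})"
    and pos: "0 < l \<Longrightarrow> c \<alpha> 0 = 0"
    and nonpos: "l \<le> 0 \<Longrightarrow> c \<alpha> 0 = - integral {0..} (\<lambda>s. of_real (exp (l * s)) * f \<alpha> s)"
    unfolding solves_homological_def l_def Let_def by blast+
  have f_K: "norm (f \<alpha> s) \<le> K * exp (- a * s)" if "0 \<le> s" for s
    using taylor_norm_le_coeff[OF f[OF that] \<open>0 < R\<close>, of \<alpha>] unfolding K_def by simp
  have "0 \<le> K" using order.trans[OF norm_ge_zero f_K[of 0]] by simp
  have K_\<omega>: "K / \<omega> \<le> K / (\<omega> * a)" and K_a: "K / a \<le> K / (\<omega> * a)"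
    using \<open>0 \<le> K\<close> assms(2-5) by (auto intro!: divide_left_mono simp: mult_le_cancel_left1 mult_le_cancel_right1)
  have decay: "K * exp (- a * s) \<le> K" if "0 \<le> s" for s
    using \<open>0 \<le> K\<close> \<open>0 < a\<close> that by (intro mult_left_le) auto
  have f_le_K: "norm (f \<alpha> s) \<le> K" if "0 \<le> s" for s using f_K[OF that] decay[OF that] by linarith
  have "norm (c \<alpha> t) \<le> K / (\<omega> * a)"
  proof (cases "0 < l")
    case True
    then have "fst \<alpha> > snd \<alpha>" using \<open>0 < \<omega>\<close> unfolding l_def by (simp add: zero_less_mult_iff)
    then have "real (Suc (snd \<alpha>)) \<le> real (fst \<alpha>)" by (simp only: of_nat_le_iff Suc_le_eq)
    then have "\<omega> \<le> l" using \<open>0 < \<omega>\<close> mult_left_mono[of 1 "real (fst \<alpha>) - real (snd \<alpha>)" \<omega>]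
      unfolding l_def by simp
    have "norm (c \<alpha> t) \<le> K / l"
      using f_le_K by (intro linear_ode_bound_pos[OF ode True pos[OF True] _ \<open>0 \<le> t\<close>]) simp
    also have "\<dots> \<le> K / \<omega>"
      using \<open>\<omega> \<le> l\<close> \<open>0 \<le> K\<close> \<open>0 < \<omega>\<close> by (intro divide_left_mono) auto
    finally show ?thesis using K_\<omega> by linarith
  next
    case False
    then have "norm (c \<alpha> t) \<le> K * exp (- a * t) / a"
      using nonpos by (intro linear_ode_bound_nonpos[OF ode _ \<open>0 < a\<close> cont f_K]) (use \<open>0 \<le> t\<close> in auto)
    also have "\<dots> \<le> K / a" using decay[OF \<open>0 \<le> t\<close>] \<open>0 < a\<close> by (intro divide_right_mono) auto
    finally show ?thesis using K_a by linarith
  qed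
  then show ?thesis unfolding K_def by (simp add: mult_ac)
qed

lemma coeff_bound_taylor_norm_le_derivatives:
  assumes coeff: "\<And>\<alpha>. norm (c \<alpha> t) \<le> A / R ^ (fst \<alpha> + snd \<alpha>)" and "0 \<le> A" "0 < R" "0 < d" "d \<le> 1"
  shows "taylor_norm_le (dp c) ((1 - d) * R) t (8 * A / (d ^ 3 * R))"
    and "taylor_norm_le (dq c) ((1 - d) * R) t (8 * A / (d ^ 3 * R))"
proof -
  have "taylor_norm_le c ((1 - d/2) * R) t (A / (1 - (1 - d/2) * R / R)\<^sup>2)"
    using assms by (intro taylor_norm_le_of_coeff_bound) auto
  then have c: "taylor_norm_le c ((1 - d/2) * R) t (4 * A / d\<^sup>2)"
    using \<open>0 < R\<close> by (simp add: power2_eq_square field_simps)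
  have radius: "(1 - d/2) * R - d * R / 2 = (1 - d) * R" by (simp add: algebra_simps)
  have bound: "4 * A / d\<^sup>2 / (d * R / 2) = 8 * A / (d ^ 3 * R)"
    by (simp add: power2_eq_square power3_eq_cube)
  have "0 < d * R / 2" "d * R / 2 \<le> (1 - d/2) * R" using assms(3-5) by (auto simp: field_simps)
  from taylor_norm_le_dp[OF c this] taylor_norm_le_dq[OF c this]
  show "taylor_norm_le (dp c) ((1 - d) * R) t (8 * A / (d ^ 3 * R))"
    and "taylor_norm_le (dq c) ((1 - d) * R) t (8 * A / (d ^ 3 * R))"
    unfolding radius bound by auto
qed

lemma step_constants_le:
  fixes \<omega> a Rstar eps d R t :: real
  assumes "0 < \<omega>" "0 < a" "0 < Rstar" "0 < eps" "0 < d" "d \<le> 1/4" "Rstar < R"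
    and small: "4 * exp 2 * eps / (\<omega> * a * Rstar\<^sup>2 * d ^ 6) \<le> 1/2"
  shows "2 * exp 1 * (8 * (eps / (\<omega> * a)) / (d ^ 3 * R)) / (d * R) \<le> 1/2"
    and "8 * exp 1 * (8 * (eps / (\<omega> * a)) / (d ^ 3 * R)) * (eps * exp (- a * t)) / (d * R)
      \<le> 8 * exp 2 * eps\<^sup>2 / (\<omega> * a * Rstar\<^sup>2 * d ^ 6) * exp (- a * t)"
proof -
  define q where "q = 16 * exp 1 * eps / (\<omega> * a * d ^ 4 * R\<^sup>2)"
  define q' where "q' = 4 * exp 2 * eps / (\<omega> * a * Rstar\<^sup>2 * d ^ 6)"
  define X where "X = 4 * exp 1 * eps / (\<omega> * a * d ^ 6 * R\<^sup>2 * Rstar\<^sup>2)"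
  have "0 < R" using assms by linarith
  have "0 \<le> X" unfolding X_def using assms by simp
  have "16 * d\<^sup>2 * Rstar\<^sup>2 \<le> 16 * (1/4)\<^sup>2 * R\<^sup>2"
    using assms by (intro mult_mono mult_left_mono power_mono) auto
  also have "\<dots> \<le> exp 1 * R\<^sup>2"
    using exp_ge_add_one_self[of 1] by (intro mult_right_mono) (auto simp: power2_eq_square)
  finally have key: "16 * d\<^sup>2 * Rstar\<^sup>2 \<le> exp 1 * R\<^sup>2" .
  have "4 * q = (16 * d\<^sup>2 * Rstar\<^sup>2) * X"
    unfolding q_def X_def using assms \<open>0 < R\<close> by (simp add: field_simps)
  also have "\<dots> \<le> (exp 1 * R\<^sup>2) * X" using key \<open>0 \<le> X\<close> by (rule mult_right_mono)
  also have "\<dots> = q'"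
    unfolding q'_def X_def using assms \<open>0 < R\<close> by (simp add: field_simps power2_eq_square flip: exp_add)
  finally have "4 * q \<le> q'" .
  have q: "2 * exp 1 * (8 * (eps / (\<omega> * a)) / (d ^ 3 * R)) / (d * R) = q"
    unfolding q_def using assms \<open>0 < R\<close> by (simp add: field_simps power2_eq_square eval_nat_numeral)
  have "q' \<le> 1/2" using small unfolding q'_def .
  with q \<open>4 * q \<le> q'\<close> show "2 * exp 1 * (8 * (eps / (\<omega> * a)) / (d ^ 3 * R)) / (d * R) \<le> 1/2"
    by linarith
  have "0 \<le> q'" unfolding q'_def using assms by simp
  have E: "0 \<le> eps * exp (- a * t)" using assms by simp
  have "8 * exp 1 * (8 * (eps / (\<omega> * a)) / (d ^ 3 * R)) * (eps * exp (- a * t)) / (d * R)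
      = 4 * q * (eps * exp (- a * t))"
    using q[symmetric] by (simp add: field_simps)
  also have "\<dots> \<le> 2 * q' * (eps * exp (- a * t))"
    using \<open>4 * q \<le> q'\<close> \<open>0 \<le> q'\<close> E by (intro mult_right_mono) auto
  also have "\<dots> = 8 * exp 2 * eps\<^sup>2 / (\<omega> * a * Rstar\<^sup>2 * d ^ 6) * exp (- a * t)"
    unfolding q'_def by (simp add: field_simps power2_eq_square)
  finally show "8 * exp 1 * (8 * (eps / (\<omega> * a)) / (d ^ 3 * R)) * (eps * exp (- a * t)) / (d * R)
      \<le> 8 * exp 2 * eps\<^sup>2 / (\<omega> * a * Rstar\<^sup>2 * d ^ 6) * exp (- a * t)" .
qed

theorem lemma3:
  fixes \<omega> a Rstar eps d R :: real and f c :: tser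
  assumes "0 < \<omega>" "\<omega> \<le> 1" "0 < a" "a \<le> 1" "0 < Rstar"
    and "0 < eps" "0 < d" "d \<le> 1/4" "Rstar < R" "R \<le> 1"
    and cont: "\<And>\<alpha>. continuous_on {0..} (f \<alpha>)"
    and bound: "\<And>t. t \<ge> 0 \<Longrightarrow> taylor_norm f R t \<le> ennreal (eps * exp (- a * t))"
    and small: "4 * exp 2 * eps / (\<omega> * a * Rstar\<^sup>2 * d ^ 6) \<le> 1/2"
    and ode: "\<And>\<alpha> t. t \<ge> 0 \<Longrightarrow>
       (c \<alpha> has_vector_derivative
          (f \<alpha> t - of_real (\<omega> * (real (fst \<alpha>) - real (snd \<alpha>))) * c \<alpha> t)) (at t within {0..})"
    and init_pos: "\<And>\<alpha>. \<omega> * (real (fst \<alpha>) - real (snd \<alpha>)) > 0 \<Longrightarrow> c \<alpha> 0 = 0"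
    and init_nonpos: "\<And>\<alpha>. \<omega> * (real (fst \<alpha>) - real (snd \<alpha>)) \<le> 0 \<Longrightarrow>
       c \<alpha> 0 = - integral {0..}
          (\<lambda>s. of_real (exp (\<omega> * (real (fst \<alpha>) - real (snd \<alpha>)) * s)) * f \<alpha> s)"
  shows "(\<forall>\<alpha> t. t \<ge> 0 \<longrightarrow>
            summable (\<lambda>s. of_real (real s / fact (s+1)) * ((lie c ^^ s) f) \<alpha> t))
       \<and> (\<forall>t\<ge>0. taylor_norm (next_pert c f) ((1 - 2*d) * R) t
              \<le> ennreal (8 * exp 2 * eps\<^sup>2 / (\<omega> * a * Rstar\<^sup>2 * d ^ 6) * exp (- a * t)))"
proof -
  have R: "0 < R" using assms(5,9) by linarith
  have f_le: "taylor_norm_le f R t (eps * exp (- a * t))" if "0 \<le> t" for t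
    using bound[OF that] taylor_norm_le_iff \<open>0 < eps\<close> by simp
  have hom: "solves_homological \<omega> f c"
    using ode init_pos init_nonpos unfolding solves_homological_def Let_def by simp
  have c_coeff: "norm (c \<alpha> t) \<le> eps / (\<omega> * a) / R ^ (fst \<alpha> + snd \<alpha>)" if "0 \<le> t" for \<alpha> t
    by (rule solves_homological_coeff_le[OF hom assms(1-4) R cont]) (use f_le that in auto)
  note constants = step_constants_le[OF assms(1,3,5-9) small]
  have step: "(\<forall>\<alpha>. summable (\<lambda>s. of_real (real s / fact (s+1)) * ((lie c ^^ s) f) \<alpha> t))
      \<and> taylor_norm_le (next_pert c f) ((1 - 2*d) * R) t
          (8 * exp 2 * eps\<^sup>2 / (\<omega> * a * Rstar\<^sup>2 * d ^ 6) * exp (- a * t))"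
    if "0 \<le> t" for t
  proof -
    have d: "0 \<le> eps / (\<omega> * a)" "0 < d" "d \<le> 1" "0 < d * R" "d * R < (1 - d) * R" "(1 - d) * R \<le> R"
      "0 \<le> (1 - 2*d) * R" using assms R by (auto simp: field_simps)
    have "(1 - d) * R - d * R = (1 - 2*d) * R" by (simp add: algebra_simps)
    from next_pert_taylor_norm_le[OF taylor_norm_le_mono[OF f_le[OF that] _ d(6) order.refl]
        coeff_bound_taylor_norm_le_derivatives[where c = c, OF c_coeff[OF that] d(1) R d(2,3)]
        d(4,5) constants(1), unfolded this]
    show ?thesis using taylor_norm_le_mono[OF _ d(7) order.refl constants(2)] d by auto
  qed
  show ?thesis
    using step taylor_norm_le_iff taylor_norm_le_nonneg by blast
qed

end
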